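(* For every $n\ge3$: - the number of pairs $(T,\{\ell_1,\ell_2\})$, with $T$ a plane tree on $n$ vertices and $\{\ell_1,\ell_2\}$ an unordered pair of distinct leaves of $T$, is $\frac{(2n-5)!}{((n-3)!)^2}$; - the sum of $d(\ell_1,\ell_2)$ over all such pairs is $(n-2)4^{n-3}+\frac{(2n-5)!}{((n-3)!)^2}$.
   Context: General (plane) trees are rooted trees in which each vertex may have any number of children, linearly ordered. The size of a tree is its number of vertices. A leaf is a vertex with no children; in particular the root of a tree with at least two vertices is not a leaf. $d(u,w)$ is the number of edges of the path between $u$ and $w$. *)

theory Defs
  imports Complex_Main
begin

datatype ptree = Node "ptree list"

fun pt_size :: "ptree \<Rightarrow> nat" where
  "pt_size (Node ts) = Suc (sum_list (map pt_size ts))"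

text \<open>Vertices are addressed by their path from the root (list of child indices).
  is_leaf T p: the vertex at path p exists and has no children.\<close>
inductive is_leaf :: "ptree \<Rightarrow> nat list \<Rightarrow> bool" where
  leaf_root: "is_leaf (Node []) []"
| leaf_child: "i < length ts \<Longrightarrow> is_leaf (ts ! i) p \<Longrightarrow> is_leaf (Node ts) (i # p)"

text \<open>Length of the longest common prefix of two paths (= depth of the lowest common ancestor).\<close>
fun lcp_len :: "nat list \<Rightarrow> nat list \<Rightarrow> nat" where
  "lcp_len (x # xs) (y # ys) = (if x = y then Suc (lcp_len xs ys) else 0)"
| "lcp_len _ _ = 0"

definition pdist :: "nat list \<Rightarrow> nat list \<Rightarrow> nat" where
  "pdist p q = length p + length q - 2 * lcp_len p q"

definition leaf_pairs :: "nat \<Rightarrow> (ptree \<times> nat list set) set" where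
  "leaf_pairs n = {(T, {p, q}) | T p q. pt_size T = n \<and> is_leaf T p \<and> is_leaf T q \<and> p \<noteq> q}"

definition pair_dist :: "nat list set \<Rightarrow> nat" where
  "pair_dist L = (THE d. \<exists>p q. L = {p, q} \<and> d = pdist p q)"

end

theory Submission
  imports Defs "HOL-Computational_Algebra.Formal_Power_Series"
begin

text \<open>
  Weight each plane tree by \<open>x\<^sup>size\<close> and, for a statistic \<open>\<phi>\<close> of its leaf set, form the
  generating function of \<open>\<phi>(leaves T)\<close>; similarly for forests. Splitting a tree into its root
  and the forest of its children, and a forest into its first tree and the rest, gives a system of
  functional equations for \<open>\<phi>\<close> = 1, number of leaves, its square, total leaf depth and total
  distance over ordered pairs of leaves. The tree series \<open>T\<close> satisfies \<open>T = x + T\<^sup>2\<close>, so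
  \<open>(1 - 2T)\<^sup>2 = 1 - 4x\<close> and \<open>1/(1 - 2T)\<close> is the central binomial series \<open>C = \<Sum> (2n)!/n!\<^sup>2 x\<^sup>n\<close>.
  Eliminating the system gives \<open>2x\<^sup>3C\<^sup>3\<close> for the ordered pairs of distinct leaves and
  \<open>2x\<^sup>3(C\<^sup>4 + C\<^sup>3)\<close> for the sum of their distances, where \<open>C\<^sup>3 = \<Sum> (2n+1)!/n!\<^sup>2 x\<^sup>n\<close> and
  \<open>C\<^sup>4 = \<Sum> (n+1) 4\<^sup>n x\<^sup>n\<close>. Counting unordered pairs halves both coefficients.
\<close>

section \<open>Central binomial series\<close>

definition central_binom :: "nat \<Rightarrow> real" where
  "central_binom n = fact (2 * n) / fact n ^ 2"

lemma central_binom_0 [simp]: "central_binom 0 = 1"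
  by (simp add: central_binom_def)

lemma central_binom_Suc: "real (Suc n) * central_binom (Suc n) = (4 * real n + 2) * central_binom n"
proof -
  define c where "c = real (Suc n)"
  have nonzero: "c \<noteq> 0" "fact n \<noteq> (0::real)"
    by (simp_all add: c_def)
  have numerator: "fact (2 * Suc n) = 2 * c * ((2 * real n + 1) * fact (2 * n))"
    by (simp add: c_def fact_Suc algebra_simps)
  have denominator: "fact (Suc n) = c * (fact n :: real)"
    by (simp add: c_def)
  show ?thesis
    unfolding central_binom_def numerator denominator c_def[symmetric]
    using nonzero by (simp add: field_simps power2_eq_square)
qed

lemma fps_nth_mult_one_minus_4X:
  "fps_nth (f * (1 - fps_const (4::real) * fps_X)) n = fps_nth f n - (if n = 0 then 0 else 4 * fps_nth f (n - 1))"
proof -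
  have "f * (1 - fps_const 4 * fps_X) = f - fps_const 4 * (fps_X * f)"
    by (simp add: algebra_simps)
  then show ?thesis by simp
qed

definition central_binom_fps :: "real fps" where
  "central_binom_fps = Abs_fps central_binom"

lemma central_binom_fps_deriv:
  "fps_deriv central_binom_fps * (1 - fps_const 4 * fps_X) = fps_const 2 * central_binom_fps"
proof (rule fps_ext)
  fix n
  show "fps_nth (fps_deriv central_binom_fps * (1 - fps_const 4 * fps_X)) n =
      fps_nth (fps_const 2 * central_binom_fps) n"
    using central_binom_Suc[of n] central_binom_Suc[of "n - 1"]
    by (cases n) (simp_all add: fps_nth_mult_one_minus_4X central_binom_fps_def algebra_simps)
qed

lemma central_binom_fps_sq: "central_binom_fps ^ 2 * (1 - fps_const 4 * fps_X) = 1"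
proof -
  let ?C = central_binom_fps and ?L = "1 - fps_const 4 * fps_X :: real fps"
  have "fps_deriv (?C ^ 2 * ?L) = 2 * ?C * (fps_deriv ?C * ?L) - fps_const 4 * ?C ^ 2"
    by (simp add: algebra_simps power2_eq_square)
  also have "\<dots> = (2 * fps_const 2 - fps_const 4) * ?C ^ 2"
    by (simp only: central_binom_fps_deriv) (simp add: algebra_simps power2_eq_square)
  also have "\<dots> = 0"
    by (simp add: numeral_fps_const)
  finally have "?C ^ 2 * ?L = fps_const (fps_nth (?C ^ 2 * ?L) 0)"
    by (rule fps_deriv_eq_0_iff[THEN iffD1])
  then show ?thesis
    by (simp add: central_binom_fps_def power2_eq_square)
qed

lemma central_binom_fps_cube:
  "central_binom_fps ^ 3 = Abs_fps (\<lambda>n. (2 * real n + 1) * central_binom n)"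
proof -
  let ?P = "Abs_fps (\<lambda>n. (2 * real n + 1) * central_binom n)"
  have P: "?P * (1 - fps_const 4 * fps_X) = central_binom_fps"
  proof (rule fps_ext)
    fix n
    show "fps_nth (?P * (1 - fps_const 4 * fps_X)) n = fps_nth central_binom_fps n"
      using central_binom_Suc[of "n - 1"]
      by (cases n) (simp_all add: fps_nth_mult_one_minus_4X central_binom_fps_def algebra_simps)
  qed
  have "?P = ?P * (central_binom_fps ^ 2 * (1 - fps_const 4 * fps_X))"
    by (simp add: central_binom_fps_sq)
  also have "\<dots> = central_binom_fps ^ 3"
    by (simp add: mult.assoc mult.left_commute[of _ "central_binom_fps ^ 2"] P power_numeral_reduce)
  finally show ?thesis ..
qed

lemma central_binom_fps_pow4: "central_binom_fps ^ 4 = Abs_fps (\<lambda>n. real (n + 1) * 4 ^ n)"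
proof -
  let ?G = "Abs_fps (\<lambda>n. 4 ^ n) :: real fps"
  have G: "?G * (1 - fps_const 4 * fps_X) = 1"
  proof (rule fps_ext)
    fix n
    show "fps_nth (?G * (1 - fps_const 4 * fps_X)) n = fps_nth 1 n"
      by (cases n) (simp_all add: fps_nth_mult_one_minus_4X)
  qed
  have "central_binom_fps ^ 2 = central_binom_fps ^ 2 * (1 - fps_const 4 * fps_X) * ?G"
    using G by (simp add: mult.assoc mult.commute[of ?G])
  then have sq: "central_binom_fps ^ 2 = ?G"
    by (simp add: central_binom_fps_sq)
  have "central_binom_fps ^ 4 = (central_binom_fps ^ 2) ^ 2"
    by (simp flip: power_mult)
  also have "\<dots> = Abs_fps (\<lambda>n. real (n + 1) * 4 ^ n)"
    unfolding sq unfolding power2_eq_square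
    by (rule fps_ext) (simp add: fps_mult_nth atLeast0AtMost flip: power_add)
  finally show ?thesis .
qed

section \<open>Eliminating the functional equations\<close>

text \<open>
  Below, \<open>X\<close> stands for the size variable, \<open>T\<close> and \<open>F\<close> for the series of trees and forests,
  and \<open>A\<close>, \<open>Q\<close>, \<open>H\<close>, \<open>W\<close> (forest versions \<open>FA\<close>, \<open>FQ\<close>, \<open>FH\<close>, \<open>FW\<close>) for the series of
  the number of leaves, its square, the total leaf depth and the total distance between leaves.
\<close>

lemma linear_equation_solve:
  fixes F T Y Z :: "'a::comm_ring_1"
  assumes "F * (1 - T) = 1" and "Y = Z + T * Y"
  shows "Y = Z * F"
proof -
  have "Y * (1 - T) = Z"
    using assms(2) by (simp add: algebra_simps)
  then have "Y * (F * (1 - T)) = Z * F"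
    by (metis mult.assoc mult.commute)
  then show ?thesis
    using assms(1) by simp
qed

lemma leaf_count_system_solve:
  fixes X T F A FA :: "'a::idom"
  assumes T: "T = X * F" and F: "F = 1 + T * F"
    and A: "A = X + X * FA" and FA: "FA = A * F + T * FA"
  shows "F * (1 - T) = 1" and "(1 - 2 * T) * A = X * (1 - T)" and "FA = A * F ^ 2"
proof -
  show F_inv: "F * (1 - T) = 1"
    using F by (simp add: algebra_simps)
  show FA_eq: "FA = A * F ^ 2"
    using linear_equation_solve[OF F_inv FA] by (simp add: power2_eq_square mult.assoc)
  have "A * (1 - T) = X * (1 - T) + A * T * (F * (1 - T))"
    using A FA_eq T by algebra
  then show "(1 - 2 * T) * A = X * (1 - T)"
    using F_inv by algebra
qed

lemma ordered_pair_system_solve: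
  fixes X T F A FA Q FQ :: "'a::idom"
  assumes T: "T = X * F" and F: "F = 1 + T * F"
    and A: "A = X + X * FA" and FA: "FA = A * F + T * FA"
    and Q: "Q = X + X * FQ" and FQ: "FQ = Q * F + T * FQ + 2 * (A * FA)"
  shows "(1 - 2 * T) ^ 3 * (Q - A) = 2 * X ^ 3"
proof -
  note sol = leaf_count_system_solve[OF T F A FA]
  have FQ_inv: "FQ * (1 - T) = Q * F + 2 * (A * FA)"
    using FQ by (simp add: algebra_simps)
  have "Q * (1 - T) = X * (1 - T) + X * (FQ * (1 - T))"
    using Q by (simp add: algebra_simps)
  also have "X * (FQ * (1 - T)) = Q * T + 2 * X * (A * FA)"
    unfolding FQ_inv unfolding T by (simp add: algebra_simps)
  finally have "(1 - 2 * T) * (Q - A) = 2 * X * (A * FA)"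
    using sol(2) by algebra
  then have "(1 - 2 * T) ^ 3 * (Q - A) = 2 * X * ((1 - 2 * T) * A) ^ 2 * F ^ 2"
    unfolding sol(3) by algebra
  also have "\<dots> = 2 * X ^ 3 * (F * (1 - T)) ^ 2"
    unfolding sol(2) by algebra
  finally show ?thesis
    unfolding sol(1) by simp
qed

lemma dist_sum_system_solve:
  fixes X T F A FA H FH W FW :: "'a::idom"
  assumes T: "T = X * F" and F: "F = 1 + T * F"
    and A: "A = X + X * FA" and FA: "FA = A * F + T * FA"
    and H: "H = X * FH" and FH: "FH = (H + A) * F + T * FH"
    and W: "W = X * FW" and FW: "FW = W * F + T * FW + 2 * ((H + A) * FA + A * FH)"
  shows "(1 - 2 * T) ^ 4 * W = 2 * X ^ 3 + 2 * X ^ 3 * (1 - 2 * T)"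
proof -
  note sol = leaf_count_system_solve[OF T F A FA]
  have FH_eq: "FH = (H + A) * F ^ 2"
    using linear_equation_solve[OF sol(1) FH] by (simp add: power2_eq_square mult.assoc)
  have "H = T * (H + A) * F"
    using H FH_eq T by (simp add: power2_eq_square algebra_simps)
  then have HA: "(1 - 2 * T) * (H + A) = A * (1 - T)"
    using sol(1) by algebra
  have FW_inv: "FW * (1 - T) = W * F + 2 * (2 * A * (H + A) * F ^ 2)"
    using FW unfolding sol(3) FH_eq by (simp add: algebra_simps)
  have "W * (1 - T) = X * (FW * (1 - T))"
    using W by (simp add: algebra_simps)
  also have "\<dots> = T * W + 4 * X * A * (H + A) * F ^ 2"
    unfolding FW_inv unfolding T by (simp add: algebra_simps)
  finally have "(1 - 2 * T) ^ 4 * W = 4 * X * ((1 - 2 * T) * A) * ((1 - 2 * T) * (H + A)) * (1 - 2 * T) * F ^ 2"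
    by algebra
  also have "\<dots> = 4 * X * (X * (1 - T)) * (A * (1 - T)) * (1 - 2 * T) * F ^ 2"
    unfolding HA sol(2) ..
  also have "\<dots> = 4 * X * (X * (1 - T)) * ((1 - 2 * T) * A) * (1 - T) * F ^ 2"
    by algebra
  also have "\<dots> = 4 * X ^ 3 * (1 - T) * (F * (1 - T)) ^ 2"
    unfolding sol(2) by algebra
  finally show ?thesis
    unfolding sol(1) by (simp add: algebra_simps)
qed

section \<open>Generating functions of trees and forests\<close>

definition trees_of_size :: "nat \<Rightarrow> ptree set" where
  "trees_of_size n = {t. pt_size t = n}"

definition forests_of_size :: "nat \<Rightarrow> ptree list set" where
  "forests_of_size n = {ts. sum_list (map pt_size ts) = n}"

lemma pt_size_pos: "pt_size t > 0"
  by (cases t) auto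

lemma trees_of_size_0: "trees_of_size 0 = {}"
  using pt_size_pos by (auto simp: trees_of_size_def)

lemma trees_of_size_Suc: "trees_of_size (Suc n) = Node ` forests_of_size n"
proof -
  have "t \<in> Node ` forests_of_size n" if "pt_size t = Suc n" for t
    using that by (cases t) (auto simp: forests_of_size_def)
  then show ?thesis by (auto simp: trees_of_size_def forests_of_size_def)
qed

lemma Nil_in_forests_of_size_iff: "[] \<in> forests_of_size n \<longleftrightarrow> n = 0"
  by (auto simp: forests_of_size_def)

lemma forests_of_size_0: "forests_of_size 0 = {[]}"
proof -
  have "ts = []" if "sum_list (map pt_size ts) = 0" for ts
    using that pt_size_pos[of "hd ts"] by (cases ts) auto
  then show ?thesis by (auto simp: forests_of_size_def)
qed

lemma nonempty_forests_of_size: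
  "{ts \<in> forests_of_size n. ts \<noteq> []} =
     (\<lambda>(t, ts). t # ts) ` (SIGMA t:(\<Union>k\<le>n. trees_of_size k). forests_of_size (n - pt_size t))"
  by (auto simp: forests_of_size_def trees_of_size_def image_iff neq_Nil_conv)

lemma finite_trees_forests_of_size: "finite (trees_of_size n) \<and> finite (forests_of_size n)"
proof (induction n rule: less_induct)
  case (less n)
  show ?case
  proof (cases n)
    case 0
    then show ?thesis by (simp add: trees_of_size_0 forests_of_size_0)
  next
    case (Suc m)
    have trees_fin: "finite (trees_of_size k)" if "k \<le> n" for k
      using that less[of k] less[of m] Suc by (cases "k = n") (auto simp: trees_of_size_Suc)
    have "finite (SIGMA t:(\<Union>k\<le>n. trees_of_size k). forests_of_size (n - pt_size t))"
      using trees_fin less pt_size_pos Suc by (intro finite_SigmaI) auto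
    then have "finite {ts \<in> forests_of_size n. ts \<noteq> []}"
      by (simp only: nonempty_forests_of_size finite_imageI)
    moreover have "{ts \<in> forests_of_size n. ts \<noteq> []} = forests_of_size n"
      using Nil_in_forests_of_size_iff[of n] Suc by auto
    ultimately show ?thesis using trees_fin by simp
  qed
qed

lemma finite_trees_of_size: "finite (trees_of_size n)"
  and finite_forests_of_size: "finite (forests_of_size n)"
  using finite_trees_forests_of_size by auto

definition tree_gf :: "(ptree \<Rightarrow> real) \<Rightarrow> real fps" where
  "tree_gf f = Abs_fps (\<lambda>n. \<Sum>t\<in>trees_of_size n. f t)"

definition forest_gf :: "(ptree list \<Rightarrow> real) \<Rightarrow> real fps" where
  "forest_gf f = Abs_fps (\<lambda>n. \<Sum>ts\<in>forests_of_size n. f ts)"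

definition cons_forest_gf :: "(ptree \<Rightarrow> ptree list \<Rightarrow> real) \<Rightarrow> real fps" where
  "cons_forest_gf g =
     Abs_fps (\<lambda>n. \<Sum>k\<le>n. \<Sum>t\<in>trees_of_size k. \<Sum>ts\<in>forests_of_size (n - k). g t ts)"

lemma tree_gf_Node: "tree_gf f = fps_X * forest_gf (\<lambda>ts. f (Node ts))"
proof (rule fps_ext)
  fix n
  show "fps_nth (tree_gf f) n = fps_nth (fps_X * forest_gf (\<lambda>ts. f (Node ts))) n"
    by (cases n) (simp_all add: tree_gf_def forest_gf_def trees_of_size_0 trees_of_size_Suc
        sum.reindex inj_on_def)
qed

lemma forest_gf_split: "forest_gf f = fps_const (f []) + cons_forest_gf (\<lambda>t ts. f (t # ts))"
proof (rule fps_ext)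
  fix n
  let ?S = "SIGMA t:(\<Union>k\<le>n. trees_of_size k). forests_of_size (n - pt_size t)"
  have "(\<Sum>ts\<in>forests_of_size n. f ts) =
      (\<Sum>ts\<in>{ts \<in> forests_of_size n. ts = []}. f ts) + (\<Sum>ts\<in>{ts \<in> forests_of_size n. ts \<noteq> []}. f ts)"
    using finite_forests_of_size by (subst sum.union_disjoint[symmetric]) (auto intro: sum.cong)
  also have "(\<Sum>ts\<in>{ts \<in> forests_of_size n. ts = []}. f ts) = (if n = 0 then f [] else 0)"
    using Nil_in_forests_of_size_iff[of n]
    by (cases "n = 0") (simp_all add: forests_of_size_0 sum.neutral)
  also have "(\<Sum>ts\<in>{ts \<in> forests_of_size n. ts \<noteq> []}. f ts) = (\<Sum>(t, ts)\<in>?S. f (t # ts))"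
    unfolding nonempty_forests_of_size by (subst sum.reindex) (auto simp: inj_on_def split_def)
  also have "\<dots> = (\<Sum>t\<in>(\<Union>k\<le>n. trees_of_size k). \<Sum>ts\<in>forests_of_size (n - pt_size t). f (t # ts))"
    by (rule sum.Sigma[symmetric]) (auto simp: finite_trees_of_size finite_forests_of_size)
  also have "\<dots> = (\<Sum>k\<le>n. \<Sum>t\<in>trees_of_size k. \<Sum>ts\<in>forests_of_size (n - k). f (t # ts))"
    by (subst sum.UNION_disjoint)
      (auto simp: finite_trees_of_size finite_trees_of_size[unfolded trees_of_size_def]
        trees_of_size_def intro!: sum.cong)
  finally show "fps_nth (forest_gf f) n = fps_nth (fps_const (f []) + cons_forest_gf (\<lambda>t ts. f (t # ts))) n"
    by (simp add: forest_gf_def cons_forest_gf_def)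
qed

lemma cons_forest_gf_mult: "cons_forest_gf (\<lambda>t ts. a t * b ts) = tree_gf a * forest_gf b"
  by (rule fps_ext) (simp add: cons_forest_gf_def tree_gf_def forest_gf_def fps_mult_nth
      atLeast0AtMost sum_product)

lemma cons_forest_gf_add:
  "cons_forest_gf (\<lambda>t ts. g t ts + h t ts) = cons_forest_gf g + cons_forest_gf h"
  by (rule fps_ext) (simp add: cons_forest_gf_def sum.distrib)

lemma cons_forest_gf_cmult: "cons_forest_gf (\<lambda>t ts. c * g t ts) = fps_const c * cons_forest_gf g"
  by (rule fps_ext) (simp add: cons_forest_gf_def sum_distrib_left)

section \<open>Leaves and their statistics\<close>

definition leaves :: "ptree \<Rightarrow> nat list set" where
  "leaves t = {p. is_leaf t p}"

definition forest_leaves :: "ptree list \<Rightarrow> nat list set" where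
  "forest_leaves ts = {i # p | i p. i < length ts \<and> is_leaf (ts ! i) p}"

definition shift_head :: "nat list \<Rightarrow> nat list" where
  "shift_head p = Suc (hd p) # tl p"

lemma leaves_Node: "leaves (Node ts) = (if ts = [] then {[]} else forest_leaves ts)"
  by (auto simp: leaves_def forest_leaves_def is_leaf.simps[of "Node ts"])

lemma forest_leaves_Nil: "forest_leaves [] = {}"
  by (simp add: forest_leaves_def)

lemma forest_leaves_Cons:
  "forest_leaves (t # ts) = Cons 0 ` leaves t \<union> shift_head ` forest_leaves ts"
proof (intro set_eqI iffI)
  fix x assume "x \<in> forest_leaves (t # ts)"
  then obtain i p where x: "x = i # p" "i < Suc (length ts)" "is_leaf ((t # ts) ! i) p"
    by (auto simp: forest_leaves_def)
  show "x \<in> Cons 0 ` leaves t \<union> shift_head ` forest_leaves ts"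
  proof (cases i)
    case 0
    then show ?thesis using x by (auto simp: leaves_def)
  next
    case (Suc j)
    then have "j # p \<in> forest_leaves ts" and "x = shift_head (j # p)"
      using x by (auto simp: forest_leaves_def shift_head_def)
    then show ?thesis by blast
  qed
next
  fix x assume "x \<in> Cons 0 ` leaves t \<union> shift_head ` forest_leaves ts"
  then show "x \<in> forest_leaves (t # ts)"
    unfolding forest_leaves_def leaves_def shift_head_def by fastforce
qed

lemma Nil_notin_forest_leaves: "[] \<notin> forest_leaves ts"
  by (auto simp: forest_leaves_def)

lemma finite_forest_leavesI: "(\<And>t. t \<in> set ts \<Longrightarrow> finite (leaves t)) \<Longrightarrow> finite (forest_leaves ts)"
  by (induction ts) (simp_all add: forest_leaves_Nil forest_leaves_Cons)

lemma finite_leaves: "finite (leaves t)"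
  by (induction t) (simp add: leaves_Node finite_forest_leavesI)

lemma finite_forest_leaves: "finite (forest_leaves ts)"
  by (simp add: finite_forest_leavesI finite_leaves)

definition depth_sum :: "nat list set \<Rightarrow> nat" where
  "depth_sum S = (\<Sum>p\<in>S. length p)"

definition dist_sum :: "nat list set \<Rightarrow> nat" where
  "dist_sum S = (\<Sum>p\<in>S. \<Sum>q\<in>S. pdist p q)"

lemma depth_sum_empty [simp]: "depth_sum {} = 0"
  by (simp add: depth_sum_def)

lemma dist_sum_empty [simp]: "dist_sum {} = 0"
  by (simp add: dist_sum_def)

lemma lcp_len_commute: "lcp_len p q = lcp_len q p"
  by (induction p q rule: lcp_len.induct) auto

lemma lcp_len_le_length: "lcp_len p q \<le> length p"
  by (induction p q rule: lcp_len.induct) auto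

lemma pdist_commute: "pdist p q = pdist q p"
  by (simp add: pdist_def lcp_len_commute)

lemma pdist_self [simp]: "pdist p p = 0"
  by (induction p) (auto simp: pdist_def)

lemma pdist_Cons_same: "pdist (i # p) (i # q) = pdist p q"
  using lcp_len_le_length[of p q] lcp_len_le_length[of q p]
  by (simp add: pdist_def lcp_len_commute)

lemma pdist_shift_head: "p \<noteq> [] \<Longrightarrow> q \<noteq> [] \<Longrightarrow> pdist (shift_head p) (shift_head q) = pdist p q"
  by (cases p; cases q) (simp_all add: shift_head_def pdist_Cons_same, simp add: pdist_def)

lemma pdist_Cons0_shift_head: "q \<noteq> [] \<Longrightarrow> pdist (0 # p) (shift_head q) = length p + length q + 1"
  by (cases q) (simp_all add: pdist_def shift_head_def)

lemma length_shift_head: "p \<noteq> [] \<Longrightarrow> length (shift_head p) = length p"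
  by (cases p) (simp_all add: shift_head_def)

lemma sum_Cons0_shift_head:
  assumes "finite S" "finite R" "[] \<notin> R"
  shows "(\<Sum>p\<in>Cons 0 ` S \<union> shift_head ` R. f p) = (\<Sum>p\<in>S. f (0 # p)) + (\<Sum>p\<in>R. f (shift_head p))"
proof -
  have inj: "inj_on shift_head R"
    using assms(3) unfolding inj_on_def by (metis list.exhaust_sel shift_head_def list.sel nat.inject)
  have disj: "Cons 0 ` S \<inter> shift_head ` R = {}"
    by (auto simp: shift_head_def)
  have "(\<Sum>p\<in>Cons 0 ` S \<union> shift_head ` R. f p) = (\<Sum>p\<in>Cons 0 ` S. f p) + (\<Sum>p\<in>shift_head ` R. f p)"
    using assms(1,2) disj by (simp add: sum.union_disjoint)
  also have "\<dots> = (\<Sum>p\<in>S. f (0 # p)) + (\<Sum>p\<in>R. f (shift_head p))"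
    by (simp add: sum.reindex[OF inj] sum.reindex[of "Cons 0"] inj_on_def)
  finally show ?thesis .
qed

lemma card_Cons0_shift_head:
  assumes "finite S" "finite R" "[] \<notin> R"
  shows "card (Cons 0 ` S \<union> shift_head ` R) = card S + card R"
  using sum_Cons0_shift_head[OF assms, of "\<lambda>_. 1::nat"] by simp

lemma depth_sum_Cons0_shift_head:
  assumes "finite S" "finite R" "[] \<notin> R"
  shows "depth_sum (Cons 0 ` S \<union> shift_head ` R) = depth_sum S + card S + depth_sum R"
proof -
  have "(\<Sum>p\<in>R. length (shift_head p)) = depth_sum R"
    unfolding depth_sum_def using assms(3) by (intro sum.cong refl) (metis length_shift_head)
  moreover have "(\<Sum>p\<in>S. length (0 # p)) = depth_sum S + card S"
    by (simp add: depth_sum_def sum_Suc)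
  ultimately show ?thesis
    using assms by (simp add: depth_sum_def sum_Cons0_shift_head)
qed

lemma dist_sum_Cons0_shift_head:
  assumes "finite S" "finite R" "[] \<notin> R"
  shows "dist_sum (Cons 0 ` S \<union> shift_head ` R) =
    dist_sum S + dist_sum R + 2 * ((depth_sum S + card S) * card R + card S * depth_sum R)"
proof -
  let ?U = "Cons 0 ` S \<union> shift_head ` R"
  have nonempty: "q \<noteq> []" if "q \<in> R" for q
    using that assms(3) by auto
  let ?cross = "\<Sum>p\<in>S. \<Sum>q\<in>R. length p + length q + 1"
  have inner: "(\<Sum>q\<in>R. length p + length q + 1) = card R * length p + depth_sum R + card R" for p
    by (simp add: depth_sum_def sum_Suc sum.distrib)
  have cross: "?cross = (depth_sum S + card S) * card R + card S * depth_sum R"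
    unfolding inner by (simp add: depth_sum_def sum.distrib algebra_simps flip: sum_distrib_left)
  have from_S: "(\<Sum>q\<in>?U. pdist (0 # p) q) = (\<Sum>q\<in>S. pdist p q) + (\<Sum>q\<in>R. length p + length q + 1)" for p
    using assms by (auto simp: sum_Cons0_shift_head pdist_Cons_same pdist_Cons0_shift_head nonempty
        intro!: sum.cong)
  have from_R: "(\<Sum>q\<in>?U. pdist (shift_head p) q) = (\<Sum>q\<in>S. length q + length p + 1) + (\<Sum>q\<in>R. pdist p q)"
    if "p \<in> R" for p
    using assms that by (auto simp: sum_Cons0_shift_head pdist_shift_head pdist_Cons0_shift_head
        pdist_commute[of "shift_head p" "0 # _"] nonempty intro!: sum.cong)
  have "dist_sum ?U = (\<Sum>p\<in>S. \<Sum>q\<in>?U. pdist (0 # p) q) + (\<Sum>p\<in>R. \<Sum>q\<in>?U. pdist (shift_head p) q)"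
    unfolding dist_sum_def using assms by (rule sum_Cons0_shift_head)
  also have "\<dots> = dist_sum S + ?cross + ((\<Sum>p\<in>R. \<Sum>q\<in>S. length q + length p + 1) + dist_sum R)"
    by (simp add: from_S from_R dist_sum_def sum.distrib cong: sum.cong)
  also have "(\<Sum>p\<in>R. \<Sum>q\<in>S. length q + length p + 1) = ?cross"
    by (rule sum.swap)
  finally show ?thesis
    unfolding cross by simp
qed

definition leaf_gf :: "(nat list set \<Rightarrow> nat) \<Rightarrow> real fps" where
  "leaf_gf \<phi> = tree_gf (\<lambda>t. real (\<phi> (leaves t)))"

definition forest_leaf_gf :: "(nat list set \<Rightarrow> nat) \<Rightarrow> real fps" where
  "forest_leaf_gf \<phi> = forest_gf (\<lambda>ts. real (\<phi> (forest_leaves ts)))"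

lemma forest_leaf_gf_split:
  "forest_leaf_gf \<phi> = fps_const (real (\<phi> {})) +
     cons_forest_gf (\<lambda>t ts. real (\<phi> (Cons 0 ` leaves t \<union> shift_head ` forest_leaves ts)))"
  unfolding forest_leaf_gf_def by (subst forest_gf_split) (simp add: forest_leaves_Nil forest_leaves_Cons)

text \<open>The constant term corrects for the one-vertex tree, whose leaf set \<open>{[]}\<close> is not the (empty)
  leaf set of its forest of children.\<close>

lemma leaf_gf_root:
  "leaf_gf \<phi> = fps_X * (forest_leaf_gf \<phi> + fps_const (real (\<phi> {[]}) - real (\<phi> {})))"
proof -
  have "leaf_gf \<phi> = fps_X * forest_gf (\<lambda>ts. real (\<phi> (leaves (Node ts))))"
    unfolding leaf_gf_def by (rule tree_gf_Node)
  also have "forest_gf (\<lambda>ts. real (\<phi> (leaves (Node ts)))) = fps_const (real (\<phi> {[]})) +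
     cons_forest_gf (\<lambda>t ts. real (\<phi> (Cons 0 ` leaves t \<union> shift_head ` forest_leaves ts)))"
    by (subst forest_gf_split) (simp add: leaves_Node forest_leaves_Cons)
  finally show ?thesis
    by (simp add: forest_leaf_gf_split fps_const_add [symmetric])
qed

lemma cons_forest_gf_leaf_mult:
  "cons_forest_gf (\<lambda>t ts. real (\<phi> (leaves t)) * real (\<psi> (forest_leaves ts))) = leaf_gf \<phi> * forest_leaf_gf \<psi>"
  unfolding leaf_gf_def forest_leaf_gf_def by (rule cons_forest_gf_mult)

lemma cons_forest_gf_leaf_head:
  "cons_forest_gf (\<lambda>t ts. real (\<phi> (leaves t))) = leaf_gf \<phi> * forest_leaf_gf (\<lambda>_. 1)"
  using cons_forest_gf_leaf_mult[of \<phi> "\<lambda>_. 1"] by simp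

lemma cons_forest_gf_leaf_tail:
  "cons_forest_gf (\<lambda>t ts. real (\<psi> (forest_leaves ts))) = leaf_gf (\<lambda>_. 1) * forest_leaf_gf \<psi>"
  using cons_forest_gf_leaf_mult[of "\<lambda>_. 1" \<psi>] by simp

lemmas cons_forest_gf_leaf_simps =
  cons_forest_gf_add cons_forest_gf_cmult cons_forest_gf_leaf_mult
  cons_forest_gf_leaf_head cons_forest_gf_leaf_tail

lemmas Cons0_shift_head_simps =
  card_Cons0_shift_head depth_sum_Cons0_shift_head dist_sum_Cons0_shift_head
  finite_leaves finite_forest_leaves Nil_notin_forest_leaves

lemma forest_leaf_gf_one:
  "forest_leaf_gf (\<lambda>_. 1) = 1 + leaf_gf (\<lambda>_. 1) * forest_leaf_gf (\<lambda>_. 1)"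
  using cons_forest_gf_leaf_mult[of "\<lambda>_. 1" "\<lambda>_. 1"] by (simp add: forest_leaf_gf_split)

lemma forest_leaf_gf_card:
  "forest_leaf_gf card = leaf_gf card * forest_leaf_gf (\<lambda>_. 1) + leaf_gf (\<lambda>_. 1) * forest_leaf_gf card"
proof -
  have "forest_leaf_gf card =
      cons_forest_gf (\<lambda>t ts. real (card (leaves t)) + real (card (forest_leaves ts)))"
    by (simp add: forest_leaf_gf_split Cons0_shift_head_simps)
  then show ?thesis
    by (simp only: cons_forest_gf_leaf_simps)
qed

lemma forest_leaf_gf_card_sq:
  "forest_leaf_gf (\<lambda>S. card S ^ 2) = leaf_gf (\<lambda>S. card S ^ 2) * forest_leaf_gf (\<lambda>_. 1)
     + leaf_gf (\<lambda>_. 1) * forest_leaf_gf (\<lambda>S. card S ^ 2) + 2 * (leaf_gf card * forest_leaf_gf card)"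
proof -
  have "forest_leaf_gf (\<lambda>S. card S ^ 2) =
      cons_forest_gf (\<lambda>t ts. real (card (leaves t) ^ 2) + real (card (forest_leaves ts) ^ 2)
        + 2 * (real (card (leaves t)) * real (card (forest_leaves ts))))"
    by (simp add: forest_leaf_gf_split Cons0_shift_head_simps power2_eq_square algebra_simps)
  then show ?thesis
    by (simp only: cons_forest_gf_leaf_simps cons_forest_gf_leaf_head[of "\<lambda>S. card S ^ 2"]
        cons_forest_gf_leaf_tail[of "\<lambda>S. card S ^ 2"]) (simp add: numeral_fps_const)
qed

lemma forest_leaf_gf_depth_sum:
  "forest_leaf_gf depth_sum = (leaf_gf depth_sum + leaf_gf card) * forest_leaf_gf (\<lambda>_. 1)
     + leaf_gf (\<lambda>_. 1) * forest_leaf_gf depth_sum"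
proof -
  have "forest_leaf_gf depth_sum =
      cons_forest_gf (\<lambda>t ts. real (depth_sum (leaves t)) + real (card (leaves t))
        + real (depth_sum (forest_leaves ts)))"
    by (simp add: forest_leaf_gf_split Cons0_shift_head_simps)
  then show ?thesis
    by (simp only: cons_forest_gf_leaf_simps) (simp add: algebra_simps)
qed

lemma forest_leaf_gf_dist_sum:
  "forest_leaf_gf dist_sum = leaf_gf dist_sum * forest_leaf_gf (\<lambda>_. 1)
     + leaf_gf (\<lambda>_. 1) * forest_leaf_gf dist_sum
     + 2 * ((leaf_gf depth_sum + leaf_gf card) * forest_leaf_gf card + leaf_gf card * forest_leaf_gf depth_sum)"
proof -
  have "forest_leaf_gf dist_sum =
      cons_forest_gf (\<lambda>t ts. real (dist_sum (leaves t)) + real (dist_sum (forest_leaves ts))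
        + 2 * (real (depth_sum (leaves t)) * real (card (forest_leaves ts))
          + real (card (leaves t)) * real (card (forest_leaves ts))
          + real (card (leaves t)) * real (depth_sum (forest_leaves ts))))"
    by (simp add: forest_leaf_gf_split Cons0_shift_head_simps algebra_simps)
  then show ?thesis
    by (simp only: cons_forest_gf_leaf_simps) (simp add: numeral_fps_const algebra_simps)
qed

lemma leaf_gf_one_root: "leaf_gf (\<lambda>_. 1) = fps_X * forest_leaf_gf (\<lambda>_. 1)"
  using leaf_gf_root[of "\<lambda>_. 1"] by simp

lemma leaf_gf_card_root: "leaf_gf card = fps_X + fps_X * forest_leaf_gf card"
  using leaf_gf_root[of card] by (simp add: algebra_simps)

lemma leaf_gf_card_sq_root: "leaf_gf (\<lambda>S. card S ^ 2) = fps_X + fps_X * forest_leaf_gf (\<lambda>S. card S ^ 2)"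
  using leaf_gf_root[of "\<lambda>S. card S ^ 2"] by (simp add: algebra_simps)

lemma leaf_gf_depth_sum_root: "leaf_gf depth_sum = fps_X * forest_leaf_gf depth_sum"
  using leaf_gf_root[of depth_sum] by (simp add: depth_sum_def)

lemma leaf_gf_dist_sum_root: "leaf_gf dist_sum = fps_X * forest_leaf_gf dist_sum"
  using leaf_gf_root[of dist_sum] by (simp add: dist_sum_def)

lemma one_minus_2_leaf_gf_one_inverse: "(1 - 2 * leaf_gf (\<lambda>_. 1)) * central_binom_fps = 1"
proof -
  let ?T = "leaf_gf (\<lambda>_. 1)" and ?C = central_binom_fps
  have "?T - ?T ^ 2 = fps_X"
    using leaf_gf_one_root forest_leaf_gf_one by algebra
  moreover have "(1 - 2 * ?T) ^ 2 = 1 - 4 * (?T - ?T ^ 2)"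
    by (simp add: power2_eq_square algebra_simps)
  ultimately have "(1 - 2 * ?T) ^ 2 = 1 - fps_const 4 * fps_X"
    by (simp add: numeral_fps_const)
  then have "((1 - 2 * ?T) * ?C) ^ 2 = 1"
    using central_binom_fps_sq by (simp add: power_mult_distrib mult.commute)
  then have "(1 - 2 * ?T) * ?C = 1 \<or> (1 - 2 * ?T) * ?C = -1"
    by (simp add: power2_eq_1_iff)
  moreover have "fps_nth ((1 - 2 * ?T) * ?C) 0 = 1"
    by (simp add: leaf_gf_def tree_gf_def trees_of_size_0 central_binom_fps_def)
  ultimately show ?thesis
    by (metis fps_neg_nth fps_one_nth one_neq_neg_one)
qed

lemma leaf_gf_card_sq_minus_card:
  "leaf_gf (\<lambda>S. card S ^ 2) - leaf_gf card = 2 * fps_X ^ 3 * central_binom_fps ^ 3"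
proof -
  let ?T = "leaf_gf (\<lambda>_. 1)" and ?C = central_binom_fps
  let ?D = "leaf_gf (\<lambda>S. card S ^ 2) - leaf_gf card"
  have "?D = ((1 - 2 * ?T) * ?C) ^ 3 * ?D"
    unfolding one_minus_2_leaf_gf_one_inverse by simp
  also have "\<dots> = ?C ^ 3 * ((1 - 2 * ?T) ^ 3 * ?D)"
    by (simp only: power_mult_distrib ac_simps)
  also have "(1 - 2 * ?T) ^ 3 * ?D = 2 * fps_X ^ 3"
    by (rule ordered_pair_system_solve[OF leaf_gf_one_root forest_leaf_gf_one leaf_gf_card_root forest_leaf_gf_card
          leaf_gf_card_sq_root forest_leaf_gf_card_sq])
  finally show ?thesis
    by (simp only: ac_simps)
qed

lemma leaf_gf_dist_sum_closed_form:
  "leaf_gf dist_sum = 2 * fps_X ^ 3 * central_binom_fps ^ 4 + 2 * fps_X ^ 3 * central_binom_fps ^ 3"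
proof -
  let ?T = "leaf_gf (\<lambda>_. 1)" and ?C = central_binom_fps
  have "leaf_gf dist_sum = ((1 - 2 * ?T) * ?C) ^ 4 * leaf_gf dist_sum"
    unfolding one_minus_2_leaf_gf_one_inverse by simp
  also have "\<dots> = ?C ^ 4 * ((1 - 2 * ?T) ^ 4 * leaf_gf dist_sum)"
    by (simp only: power_mult_distrib ac_simps)
  also have "(1 - 2 * ?T) ^ 4 * leaf_gf dist_sum = 2 * fps_X ^ 3 + 2 * fps_X ^ 3 * (1 - 2 * ?T)"
    by (rule dist_sum_system_solve[OF leaf_gf_one_root forest_leaf_gf_one leaf_gf_card_root forest_leaf_gf_card
          leaf_gf_depth_sum_root forest_leaf_gf_depth_sum leaf_gf_dist_sum_root forest_leaf_gf_dist_sum])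
  also have "?C ^ 4 * (2 * fps_X ^ 3 + 2 * fps_X ^ 3 * (1 - 2 * ?T))
      = 2 * fps_X ^ 3 * ?C ^ 4 + 2 * fps_X ^ 3 * ((1 - 2 * ?T) * ?C) * ?C ^ 3"
    by algebra
  finally show ?thesis
    unfolding one_minus_2_leaf_gf_one_inverse by simp
qed

section \<open>Pairs of leaves\<close>

lemma pair_dist_doubleton: "pair_dist {p, q} = pdist p q"
  unfolding pair_dist_def
proof (rule the_equality)
  fix d assume "\<exists>p' q'. {p, q} = {p', q'} \<and> d = pdist p' q'"
  then show "d = pdist p q"
    by (auto simp: doubleton_eq_iff pdist_commute)
qed blast

lemma sum_leaf_pairs:
  fixes g :: "nat list set \<Rightarrow> real"
  shows "2 * (\<Sum>(T, L)\<in>leaf_pairs n. g L) =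
    (\<Sum>T\<in>trees_of_size n. \<Sum>p\<in>leaves T. \<Sum>q\<in>leaves T. if p = q then 0 else g {p, q})"
proof -
  define OP where "OP = (SIGMA T:trees_of_size n. {(p, q). p \<in> leaves T \<and> q \<in> leaves T \<and> p \<noteq> q})"
  define h where "h = (\<lambda>(T :: ptree, (p :: nat list, q :: nat list)). (T, {p, q}))"
  have finite_pairs: "finite {(p, q). p \<in> leaves T \<and> q \<in> leaves T \<and> p \<noteq> q}" for T
    by (rule finite_subset[of _ "leaves T \<times> leaves T"]) (auto simp: finite_leaves)
  have image: "leaf_pairs n = h ` OP"
    unfolding leaf_pairs_def OP_def h_def trees_of_size_def leaves_def by (auto simp: image_iff) blast
  have fibre: "{x \<in> OP. h x = h y} = {(T, (p, q)), (T, (q, p))}" if "y = (T, (p, q))" "y \<in> OP" for y T p q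
    using that unfolding h_def OP_def by (auto simp: doubleton_eq_iff)
  have "(\<Sum>x\<in>OP. g (snd (h x))) = (\<Sum>y\<in>h ` OP. \<Sum>x\<in>{x \<in> OP. h x = y}. g (snd (h x)))"
    using finite_pairs by (intro sum.image_gen) (auto simp: OP_def finite_trees_of_size)
  also have "\<dots> = (\<Sum>y\<in>h ` OP. 2 * g (snd y))"
  proof (rule sum.cong[OF refl])
    fix y assume "y \<in> h ` OP"
    then obtain T p q where y: "y = h (T, (p, q))" "(T, (p, q)) \<in> OP" by auto
    then have "p \<noteq> q" by (auto simp: OP_def)
    then show "(\<Sum>x\<in>{x \<in> OP. h x = y}. g (snd (h x))) = 2 * g (snd y)"
      unfolding y(1) fibre[OF refl y(2)] by (simp add: h_def insert_commute)
  qed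
  finally have "2 * (\<Sum>(T, L)\<in>leaf_pairs n. g L) = (\<Sum>x\<in>OP. g (snd (h x)))"
    by (simp add: image sum_distrib_left split_def)
  also have "\<dots> = (\<Sum>(T, pq)\<in>OP. g {fst pq, snd pq})"
    by (intro sum.cong) (auto simp: h_def)
  also have "\<dots> = (\<Sum>T\<in>trees_of_size n. \<Sum>(p, q)\<in>{(p, q). p \<in> leaves T \<and> q \<in> leaves T \<and> p \<noteq> q}. g {p, q})"
    unfolding OP_def using finite_pairs
    by (subst sum.Sigma[symmetric]) (auto simp: finite_trees_of_size split_def)
  also have "\<dots> = (\<Sum>T\<in>trees_of_size n. \<Sum>p\<in>leaves T. \<Sum>q\<in>leaves T. if p = q then 0 else g {p, q})"
  proof (rule sum.cong[OF refl])
    fix T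
    have "{(p, q). p \<in> leaves T \<and> q \<in> leaves T \<and> p \<noteq> q} = {x \<in> leaves T \<times> leaves T. fst x \<noteq> snd x}"
      by auto
    then have "(\<Sum>(p, q)\<in>{(p, q). p \<in> leaves T \<and> q \<in> leaves T \<and> p \<noteq> q}. g {p, q})
        = (\<Sum>x\<in>leaves T \<times> leaves T. if fst x \<noteq> snd x then g {fst x, snd x} else 0)"
      by (simp add: sum.inter_filter finite_leaves split_def)
    also have "\<dots> = (\<Sum>p\<in>leaves T. \<Sum>q\<in>leaves T. if p = q then 0 else g {p, q})"
      unfolding sum.cartesian_product by (intro sum.cong) auto
    finally show "(\<Sum>(p, q)\<in>{(p, q). p \<in> leaves T \<and> q \<in> leaves T \<and> p \<noteq> q}. g {p, q})
        = (\<Sum>p\<in>leaves T. \<Sum>q\<in>leaves T. if p = q then 0 else g {p, q})" .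
  qed
  finally show ?thesis .
qed

lemma sum_offdiagonal_ones:
  assumes "finite S"
  shows "(\<Sum>p\<in>S. \<Sum>q\<in>S. if p = q then 0 else (1::real)) = real (card S) ^ 2 - real (card S)"
proof -
  have "(\<Sum>q\<in>S. if p = q then 0 else (1::real)) = (\<Sum>q\<in>S. 1 - (if p = q then 1 else 0))" for p
    by (intro sum.cong) auto
  also have "\<dots> p = real (card S) - 1" if "p \<in> S" for p
    using assms that by (simp add: sum_subtractf)
  finally have "(\<Sum>p\<in>S. \<Sum>q\<in>S. if p = q then 0 else (1::real)) = (\<Sum>p\<in>S. real (card S) - 1)"
    by (intro sum.cong) auto
  then show ?thesis
    by (simp add: power2_eq_square algebra_simps)
qed

lemma card_leaf_pairs_gf:
  "2 * real (card (leaf_pairs n)) = fps_nth (leaf_gf (\<lambda>S. card S ^ 2) - leaf_gf card) n"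
proof -
  have "2 * real (card (leaf_pairs n)) = 2 * (\<Sum>(T, L)\<in>leaf_pairs n. 1 :: real)"
    by (simp add: split_def)
  also have "\<dots> = (\<Sum>T\<in>trees_of_size n. real (card (leaves T)) ^ 2 - real (card (leaves T)))"
    unfolding sum_leaf_pairs by (simp add: sum_offdiagonal_ones finite_leaves)
  finally show ?thesis
    by (simp add: leaf_gf_def tree_gf_def sum_subtractf)
qed

lemma sum_pair_dist_gf:
  "2 * real (\<Sum>(T, L)\<in>leaf_pairs n. pair_dist L) = fps_nth (leaf_gf dist_sum) n"
proof -
  have "2 * real (\<Sum>(T, L)\<in>leaf_pairs n. pair_dist L) = 2 * (\<Sum>(T, L)\<in>leaf_pairs n. real (pair_dist L))"
    by (simp add: split_def)
  also have "\<dots> = (\<Sum>T\<in>trees_of_size n. real (dist_sum (leaves T)))"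
    unfolding sum_leaf_pairs dist_sum_def of_nat_sum
    by (intro sum.cong refl) (simp add: pair_dist_doubleton)
  finally show ?thesis
    by (simp add: leaf_gf_def tree_gf_def)
qed

lemma fps_nth_2_X_power_mult: "fps_nth (2 * fps_X ^ k * f) (m + k) = 2 * fps_nth (f :: real fps) m"
proof -
  have "2 * fps_X ^ k * f = fps_const 2 * (fps_X ^ k * f)"
    by (simp add: numeral_fps_const mult.assoc)
  then have "fps_nth (2 * fps_X ^ k * f) (m + k) = 2 * fps_nth (fps_X ^ k * f) (m + k)"
    by (simp only: fps_mult_left_const_nth)
  then show ?thesis
    by (simp add: fps_X_power_mult_nth)
qed

theorem proposition3p4:
  fixes n :: nat
  assumes "n \<ge> 3"
  shows "real (card (leaf_pairs n)) = fact (2*n - 5) / (fact (n - 3))^2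
    \<and> real (\<Sum>(T, L)\<in>leaf_pairs n. pair_dist L)
        = real (n - 2) * 4 ^ (n - 3) + fact (2*n - 5) / (fact (n - 3))^2"
proof -
  obtain m where n: "n = m + 3"
    using assms by (metis add.commute le_Suc_ex)
  have "fps_nth (central_binom_fps ^ 3) m = (2 * real m + 1) * central_binom m"
    unfolding central_binom_fps_cube by simp
  also have "\<dots> = fact (2*n - 5) / (fact (n - 3))^2"
    by (simp add: central_binom_def n numeral_eq_Suc)
  finally have cube_coeff: "fps_nth (central_binom_fps ^ 3) m = fact (2*n - 5) / (fact (n - 3))^2" .
  have "2 * real (card (leaf_pairs n)) = 2 * fps_nth (central_binom_fps ^ 3) m"
    unfolding card_leaf_pairs_gf leaf_gf_card_sq_minus_card n by (rule fps_nth_2_X_power_mult)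
  moreover have "2 * real (\<Sum>(T, L)\<in>leaf_pairs n. pair_dist L) =
      2 * (real (n - 2) * 4 ^ (n - 3)) + 2 * fps_nth (central_binom_fps ^ 3) m"
    unfolding sum_pair_dist_gf leaf_gf_dist_sum_closed_form n fps_add_nth fps_nth_2_X_power_mult
    by (simp add: central_binom_fps_pow4)
  ultimately show ?thesis
    unfolding cube_coeff by simp
qed

end
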